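(* The space $\Gamma(S^1)$ is homotopy equivalent to a wedge of two circles; in particular it is a $K(F_2,1)$ with $F_2$ the free group on two generators.
   Context: $Y=\mathbb C\setminus\{(\lambda,0):\lambda\in\mathbb Z\}$. $\Gamma(S^1)=\mathbb R\times_{\mathbb Z}Y$, the quotient of $\mathbb R\times Y$ by the diagonal $\mathbb Z$-action in which the generator acts by $s\mapsto s+1$ on $\mathbb R$ and by $z\mapsto1+\overline z$ on $Y$; it is a fibre bundle over $S^1=\mathbb R/\mathbb Z$ with fibre $Y$. *)

theory Defs
  imports "HOL-Analysis.Analysis"
begin

definition quot_topology :: "'a topology \<Rightarrow> ('a \<Rightarrow> 'b) \<Rightarrow> 'b topology" where
  "quot_topology X f = topology (\<lambda>U. U \<subseteq> f ` topspace X \<and> openin X {x \<in> topspace X. f x \<in> U})"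

lemma istopology_quot: "istopology (\<lambda>U. U \<subseteq> f ` topspace X \<and> openin X {x \<in> topspace X. f x \<in> U})"
proof -
  have 1: "{x \<in> topspace X. f x \<in> S \<inter> T} = {x \<in> topspace X. f x \<in> S} \<inter> {x \<in> topspace X. f x \<in> T}" for S T
    by auto
  have 2: "{x \<in> topspace X. f x \<in> \<Union>K} = (\<Union>S\<in>K. {x \<in> topspace X. f x \<in> S})" for K
    by auto
  show ?thesis
    unfolding istopology_def 1 2 by (auto intro!: openin_Int openin_Union)
qed

definition Yset :: "complex set" where
  "Yset = {z. \<not> (Im z = 0 \<and> Re z \<in> \<int>)}"

definition gen_act :: "real \<times> complex \<Rightarrow> real \<times> complex" where
  "gen_act p = (fst p + 1, 1 + cnj (snd p))"

definition orbit_Z :: "real \<times> complex \<Rightarrow> (real \<times> complex) set" where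
  "orbit_Z p = {q. \<exists>n::nat. q = (gen_act ^^ n) p \<or> p = (gen_act ^^ n) q}"

text \<open>Gamma(S^1) = R x_Z Y, with the quotient topology.\<close>
definition Gamma_S1 :: "(real \<times> complex) set topology" where
  "Gamma_S1 = quot_topology (subtopology euclidean (UNIV \<times> Yset)) orbit_Z"

definition wedge_two_circles :: "complex topology" where
  "wedge_two_circles = subtopology euclidean (sphere (-1) 1 \<union> sphere 1 1)"

end

(* Write sigma(s, z) = (s + 1, 1 + cnj z) for the generator of the Z-action. The two lines
   x |-> (x, x -+ i cos (pi x)) in R x Y avoid the punctures, are mapped to themselves by sigma
   (shifting x by 1) and meet exactly over the half-integers; so their image in Gamma(S^1), the
   spine, is a wedge of two circles. An explicit sigma-equivariant map from Y onto the spine, for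
   which the segment from z to its image never meets a puncture, gives a straight-line
   deformation of R x Y that descends to Gamma(S^1) and pushes it onto the spine. Conversely the
   parametrisation of the spine factors through the wedge, which is a quotient of the compact set
   {-1, 1} x [-1/2, 1/2]. The composite wedge -> Gamma(S^1) -> wedge is not the identity but
   rotates each circle about its centre by an angle vanishing at the wedge point, and this
   rotation unwinds linearly. *)

theory Submission
  imports Defs
begin

section \<open>The deck transformation and the quotient\<close>

lemma snd_gen_act [simp]: "snd (gen_act p) = 1 + cnj (snd p)"
  by (simp add: gen_act_def)

lemma gen_act_inj: "gen_act p = gen_act q \<Longrightarrow> p = q"
  by (cases p; cases q) (auto simp: gen_act_def complex_eq_iff)

lemma gen_act_affine: "gen_act ((1 - t) *\<^sub>R a + t *\<^sub>R b) = (1 - t) *\<^sub>R gen_act a + t *\<^sub>R gen_act b"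
  by (simp add: gen_act_def prod_eq_iff complex_eq_iff algebra_simps)

lemma gen_act_mem_orbit_Z_iff: "gen_act p \<in> orbit_Z q \<longleftrightarrow> p \<in> orbit_Z q"
proof
  assume "gen_act p \<in> orbit_Z q"
  then obtain n where "gen_act p = (gen_act ^^ n) q \<or> q = (gen_act ^^ Suc n) p"
    unfolding orbit_Z_def by (auto simp: funpow_swap1)
  then consider "q = (gen_act ^^ 1) p" | m where "p = (gen_act ^^ m) q" | "q = (gen_act ^^ Suc n) p"
    by (cases n) (auto dest: gen_act_inj)
  then show "p \<in> orbit_Z q"
    unfolding orbit_Z_def by cases blast+
next
  assume "p \<in> orbit_Z q"
  then obtain n where "p = (gen_act ^^ n) q \<or> q = (gen_act ^^ n) p"
    unfolding orbit_Z_def by blast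
  then consider "gen_act p = (gen_act ^^ Suc n) q" | "gen_act p = (gen_act ^^ 1) q"
    | m where "q = (gen_act ^^ m) (gen_act p)"
    by (cases n) (auto simp: funpow_swap1)
  then show "gen_act p \<in> orbit_Z q"
    unfolding orbit_Z_def by cases blast+
qed

lemma orbit_Z_gen_act: "orbit_Z (gen_act p) = orbit_Z p"
proof -
  have sym: "q \<in> orbit_Z p \<longleftrightarrow> p \<in> orbit_Z q" for p q
    unfolding orbit_Z_def by blast
  show ?thesis
    using gen_act_mem_orbit_Z_iff sym by blast
qed

lemma orbit_Z_invariant:
  assumes inv: "\<And>p. F (gen_act p) = F p" and eq: "orbit_Z p = orbit_Z q"
  shows "F p = F q"
proof -
  have funpow: "F ((gen_act ^^ n) x) = F x" for n x
    by (induction n) (simp_all add: inv)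
  have "q \<in> orbit_Z q"
    unfolding orbit_Z_def by (metis (mono_tags) funpow_0 mem_Collect_eq)
  then have "q \<in> orbit_Z p"
    using eq by simp
  then obtain n where "q = (gen_act ^^ n) p \<or> p = (gen_act ^^ n) q"
    unfolding orbit_Z_def by blast
  then show ?thesis
    using funpow by metis
qed

lemma orbit_Z_shift:
  assumes "\<And>x. gen_act (c x) = c (x + 1)"
  shows "orbit_Z (c (x + of_int k)) = orbit_Z (c x)"
proof (induction k rule: int_induct[of _ 0])
  case (step1 i)
  have "c (x + of_int (i + 1)) = gen_act (c (x + of_int i))"
    by (simp add: assms add.assoc)
  then show ?case
    using step1 by (simp add: orbit_Z_gen_act)
next
  case (step2 i)
  have "c (x + of_int i) = gen_act (c (x + of_int (i - 1)))"
    by (simp add: assms)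
  then show ?case
    using step2 by (simp add: orbit_Z_gen_act)
qed simp

lemma openin_quot_topology:
  "openin (quot_topology X f) = (\<lambda>U. U \<subseteq> f ` topspace X \<and> openin X {x \<in> topspace X. f x \<in> U})"
  unfolding quot_topology_def by (rule topology_inverse'[OF istopology_quot])

lemma topspace_quot_topology: "topspace (quot_topology X f) = f ` topspace X"
proof -
  have "{x \<in> topspace X. f x \<in> f ` topspace X} = topspace X"
    by auto
  then have "openin (quot_topology X f) (f ` topspace X)"
    by (simp add: openin_quot_topology)
  then show ?thesis
    by (auto dest: openin_subset simp: topspace_def openin_quot_topology)
qed

lemma quotient_map_quot_topology: "quotient_map X (quot_topology X f) f"
  unfolding quotient_map_def topspace_quot_topology openin_quot_topology by auto

lemma quotient_map_Gamma_S1: "quotient_map (top_of_set (UNIV \<times> Yset)) Gamma_S1 orbit_Z"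
  unfolding Gamma_S1_def by (rule quotient_map_quot_topology)

lemma topspace_Gamma_S1: "topspace Gamma_S1 = orbit_Z ` (UNIV \<times> Yset)"
  unfolding Gamma_S1_def topspace_quot_topology by simp

lemma Gamma_S1_lift_exists:
  assumes cont: "continuous_map (top_of_set (UNIV \<times> Yset)) Z h" and inv: "\<And>p. h (gen_act p) = h p"
  obtains g where "continuous_map Gamma_S1 Z g" "\<And>p. p \<in> UNIV \<times> Yset \<Longrightarrow> g (orbit_Z p) = h p"
  using quotient_map_lift_exists[OF quotient_map_Gamma_S1 cont] orbit_Z_invariant[of h, OF inv]
  by (metis topspace_euclidean_subtopology)

lemma homotopic_with_Gamma_S1:
  fixes h :: "real \<times> (real \<times> complex) \<Rightarrow> real \<times> complex"
  assumes cont: "continuous_map (top_of_set ({0..1} \<times> (UNIV \<times> Yset))) (top_of_set (UNIV \<times> Yset)) h"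
    and equiv: "\<And>t p. h (t, gen_act p) = gen_act (h (t, p))"
    and start: "\<And>p. p \<in> UNIV \<times> Yset \<Longrightarrow> \<phi> (orbit_Z p) = orbit_Z (h (0, p))"
    and finish: "\<And>p. p \<in> UNIV \<times> Yset \<Longrightarrow> \<psi> (orbit_Z p) = orbit_Z (h (1, p))"
  shows "homotopic_with (\<lambda>_. True) Gamma_S1 Gamma_S1 \<phi> \<psi>"
proof -
  let ?I = "top_of_set {0..1::real}"
  let ?X = "prod_topology ?I (top_of_set (UNIV \<times> Yset))"
  let ?q = "\<lambda>(t, p). (t, orbit_Z p)"
  \<comment> \<open>\<open>[0, 1]\<close> is locally compact, so \<open>id \<times> orbit_Z\<close> is again a quotient map.\<close>
  have quot: "quotient_map ?X (prod_topology ?I Gamma_S1) ?q"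
    by (rule quotient_map_prod_right[OF _ _ quotient_map_Gamma_S1])
       (simp_all add: compact_imp_locally_compact_space compact_space_subtopology Hausdorff_space_subtopology)
  have cont': "continuous_map ?X Gamma_S1 (orbit_Z \<circ> h)"
    using continuous_map_compose[OF cont quotient_imp_continuous_map[OF quotient_map_Gamma_S1]]
    by simp
  have fibres: "(orbit_Z \<circ> h) x = (orbit_Z \<circ> h) y" if "?q x = ?q y" for x y
  proof -
    obtain t p t' q where xy: "x = (t, p)" "y = (t', q)"
      by (meson surj_pair)
    with that have "t' = t" and pq: "orbit_Z p = orbit_Z q"
      by auto
    have "orbit_Z (h (t, p)) = orbit_Z (h (t, q))"
      by (rule orbit_Z_invariant[OF _ pq]) (simp add: equiv orbit_Z_gen_act)
    then show ?thesis
      using xy \<open>t' = t\<close> by simp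
  qed
  obtain H where H: "continuous_map (prod_topology ?I Gamma_S1) Gamma_S1 H"
    and H_orbit: "\<And>x. x \<in> topspace ?X \<Longrightarrow> H (?q x) = (orbit_Z \<circ> h) x"
    by (rule quotient_map_lift_exists[OF quot cont' fibres]) auto
  have "\<forall>x\<in>topspace Gamma_S1. H (0, x) = \<phi> x" "\<forall>x\<in>topspace Gamma_S1. H (1, x) = \<psi> x"
    using H_orbit start finish by (auto simp: topspace_Gamma_S1)
  then show ?thesis
    using H by (subst homotopic_with) auto
qed

section \<open>The spine and the deformation onto it\<close>

definition spine :: "real \<Rightarrow> real \<Rightarrow> real \<times> complex" where
  "spine e x = (x, complex_of_real x - \<i> * complex_of_real (e * cos (pi * x)))"

lemma gen_act_spine: "gen_act (spine e x) = spine e (x + 1)"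
  by (simp add: gen_act_def spine_def complex_eq_iff distrib_left)

lemma orbit_Z_spine_shift: "orbit_Z (spine e (x + of_int k)) = orbit_Z (spine e x)"
  by (rule orbit_Z_shift) (rule gen_act_spine)

lemma spine_in_Yset:
  assumes "e \<noteq> 0"
  shows "spine e x \<in> UNIV \<times> Yset"
proof -
  have "cos (pi * x) \<noteq> 0" if "x \<in> \<int>"
  proof -
    have "sin (pi * x) = 0"
      using that by (auto elim!: Ints_cases simp: sin_zero_iff_int2 mult.commute)
    then show ?thesis
      using sin_cos_squared_add[of "pi * x"] by auto
  qed
  then show ?thesis
    using assms by (auto simp: spine_def Yset_def)
qed

lemma spine_cos_eq_0: "cos (pi * x) = 0 \<Longrightarrow> spine e x = spine e' x"
  by (simp add: spine_def)

lemma continuous_on_spine: "continuous_on S (spine e)"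
  unfolding spine_def by (intro continuous_intros)

text \<open>The \<open>arctan\<close> shift makes \<open>cos (pi spine_param z) = c y\<^sup>2 / ((s\<^sup>2 + y\<^sup>2) sqrt (1 + h\<^sup>2))\<close>,
  where \<open>s, c = sin, cos (pi Re z)\<close>, \<open>y = Im z\<close> and \<open>h\<close> is the argument of \<open>arctan\<close>: it vanishes
  on the real axis and otherwise has the sign of \<open>c\<close>. Hence \<open>spine_proj z\<close> lies on the branch of
  the spine on the same side of the real axis as \<open>z\<close>, and a real point goes to the nearest
  crossing point. \<open>spine_proj\<close> is not a retraction: it slides the spine along itself.\<close>

definition spine_param :: "complex \<Rightarrow> real" where
  "spine_param z =
     Re z + arctan (sin (pi * Re z) * cos (pi * Re z) / ((sin (pi * Re z))\<^sup>2 + (Im z)\<^sup>2)) / pi"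

definition spine_side :: "complex \<Rightarrow> real" where
  "spine_side z = (if Im z * cos (pi * Re z) \<le> 0 then 1 else -1)"

definition spine_proj :: "complex \<Rightarrow> real \<times> complex" where
  "spine_proj z = spine (spine_side z) (spine_param z)"

lemma spine_proj_in_Yset: "spine_proj z \<in> UNIV \<times> Yset"
  unfolding spine_proj_def by (rule spine_in_Yset) (simp add: spine_side_def)

lemma spine_param_gen_act: "spine_param (1 + cnj z) = spine_param z + 1"
  by (simp add: spine_param_def add.commute[of 1] distrib_left)

lemma spine_side_gen_act: "spine_side (1 + cnj z) = spine_side z"
  by (simp add: spine_side_def add.commute[of 1] distrib_left)

lemma spine_proj_gen_act: "spine_proj (1 + cnj z) = gen_act (spine_proj z)"
  by (simp add: spine_proj_def spine_param_gen_act spine_side_gen_act gen_act_spine)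

lemma abs_spine_param_diff: "\<bar>spine_param z - Re z\<bar> < 1/2"
proof -
  have "\<bar>arctan y\<bar> < pi / 2" for y
    using arctan_bounded[of y] by linarith
  then show ?thesis
    by (simp add: spine_param_def divide_less_eq)
qed

lemma spine_denominator_pos:
  assumes "z \<in> Yset"
  shows "0 < (sin (pi * Re z))\<^sup>2 + (Im z)\<^sup>2"
proof (rule ccontr)
  assume "\<not> ?thesis"
  then have "sin (pi * Re z) = 0" "Im z = 0"
    by (simp_all add: sum_power2_le_zero_iff not_less)
  then have "Re z \<in> \<int>" "Im z = 0"
    by (auto simp: sin_zero_iff_int2)
  with assms show False
    by (simp add: Yset_def)
qed

lemma cos_spine_param:
  assumes "z \<in> Yset"
  obtains k where "0 \<le> k" "k = 0 \<longleftrightarrow> Im z = 0" "cos (pi * spine_param z) = k * cos (pi * Re z)"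
proof
  define s c y where "s = sin (pi * Re z)" and "c = cos (pi * Re z)" and "y = Im z"
  define h where "h = s * c / (s\<^sup>2 + y\<^sup>2)"
  have D: "0 < s\<^sup>2 + y\<^sup>2" and R: "0 < sqrt (1 + h\<^sup>2)"
    using spine_denominator_pos[OF assms] by (simp_all add: s_def y_def add_pos_nonneg)
  have "cos (pi * spine_param z) = cos (pi * Re z + arctan h)"
    by (simp add: spine_param_def h_def s_def c_def y_def distrib_left)
  also have "\<dots> = (c - s * h) / sqrt (1 + h\<^sup>2)"
    by (simp add: cos_add cos_arctan sin_arctan c_def s_def diff_divide_distrib)
  also have "c - s * h = (c * (s\<^sup>2 + y\<^sup>2) - s * (s * c)) / (s\<^sup>2 + y\<^sup>2)"
    using D by (auto simp: h_def diff_divide_distrib)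
  also have "\<dots> = c * y\<^sup>2 / (s\<^sup>2 + y\<^sup>2)"
    by (simp add: algebra_simps power2_eq_square)
  finally show "cos (pi * spine_param z) = y\<^sup>2 / ((s\<^sup>2 + y\<^sup>2) * sqrt (1 + h\<^sup>2)) * cos (pi * Re z)"
    by (simp add: c_def)
  show "0 \<le> y\<^sup>2 / ((s\<^sup>2 + y\<^sup>2) * sqrt (1 + h\<^sup>2))" "y\<^sup>2 / ((s\<^sup>2 + y\<^sup>2) * sqrt (1 + h\<^sup>2)) = 0 \<longleftrightarrow> Im z = 0"
    using D R by (auto simp: y_def)
qed

lemma cos_spine_param_eq_0:
  assumes "z \<in> Yset" "Im z * cos (pi * Re z) = 0"
  shows "cos (pi * spine_param z) = 0"
  using cos_spine_param[OF assms(1)] assms(2) by (metis mult_eq_0_iff)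

lemma Im_spine_proj_sign:
  assumes "z \<in> Yset"
  shows "0 \<le> Im (snd (spine_proj z)) * Im z"
proof -
  obtain k where "0 \<le> k" "cos (pi * spine_param z) = k * cos (pi * Re z)"
    using cos_spine_param[OF assms] by blast
  then show ?thesis
    by (auto simp: spine_proj_def spine_def spine_side_def mult_nonneg_nonpos mult_le_0_iff
        mult.commute mult.left_commute)
qed

lemma segment_spine_proj_in_Yset:
  assumes z: "z \<in> Yset" and t: "0 \<le> t" "t \<le> 1"
  shows "(1 - t) *\<^sub>R snd (spine_proj z) + t *\<^sub>R z \<in> Yset"
    (is "?w \<in> Yset")
proof (cases "Im z = 0")
  case False
  have "Im ?w * Im z = (1 - t) * (Im (snd (spine_proj z)) * Im z) + t * (Im z)\<^sup>2"
    by (simp add: algebra_simps power2_eq_square)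
  moreover have "0 \<le> (1 - t) * (Im (snd (spine_proj z)) * Im z)"
    using Im_spine_proj_sign[OF z] t by simp
  ultimately have "Im ?w \<noteq> 0 \<or> t = 0"
    using False t by (auto simp: add_nonneg_eq_0_iff)
  moreover have "snd (spine_proj z) \<in> Yset"
    using spine_proj_in_Yset[of z] by (simp add: mem_Times_iff)
  ultimately show ?thesis
    by (auto simp: Yset_def)
next
  case True
  then have "cos (pi * spine_param z) = 0"
    using cos_spine_param_eq_0[OF z] by simp
  then obtain n :: int where "pi * spine_param z = pi * (of_int n + 1/2)"
    by (auto simp: cos_zero_iff_int2 algebra_simps)
  then have n: "spine_param z = of_int n + 1/2"
    by simp
  then have "of_int n < Re z" "Re z < of_int n + 1"
    using abs_spine_param_diff[of z] by arith+
  then have "(1 - t) *\<^sub>R spine_param z + t *\<^sub>R Re z \<in> {of_int n<..<of_int n + 1}"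
    using t n by (intro convexD_alt) auto
  moreover have "Re ?w = (1 - t) *\<^sub>R spine_param z + t *\<^sub>R Re z"
    using \<open>cos (pi * spine_param z) = 0\<close> by (simp add: spine_proj_def spine_def)
  ultimately have "of_int n < Re ?w" "Re ?w < of_int n + 1"
    by auto
  then have "Re ?w \<notin> \<int>"
    by (metis Ints_cases of_int_less_iff zless_imp_add1_zle of_int_add of_int_1 not_less)
  then show ?thesis
    by (simp add: Yset_def)
qed

lemma continuous_on_spine_param: "continuous_on Yset spine_param"
  unfolding spine_param_def
  by (intro continuous_intros) (auto dest: spine_denominator_pos)

lemma continuous_on_spine_cases:
  assumes cont: "\<And>e. continuous_on UNIV (F e)"
    and agree: "\<And>x. cos (pi * x) = 0 \<Longrightarrow> F 1 x = F (-1) x"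
  shows "continuous_on Yset (\<lambda>z. F (spine_side z) (spine_param z))"
proof -
  have "continuous_on S (\<lambda>z. F e (spine_param z))" if "S \<subseteq> Yset" for e S
    using continuous_on_compose2[OF cont continuous_on_spine_param] continuous_on_subset that by blast
  then have "continuous_on Yset (\<lambda>z. if Im z * cos (pi * Re z) \<le> 0 then F 1 (spine_param z) else F (-1) (spine_param z))"
    by (intro continuous_on_cases_le continuous_intros) (simp_all add: agree cos_spine_param_eq_0)
  then show ?thesis
    by (simp add: spine_side_def if_distrib[of "\<lambda>e. F e _"])
qed

definition spine_deformation :: "real \<times> (real \<times> complex) \<Rightarrow> real \<times> complex" where
  "spine_deformation = (\<lambda>(t, p). (1 - t) *\<^sub>R spine_proj (snd p) + t *\<^sub>R p)"

lemma homotopic_spine_proj_id: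
  assumes "\<And>p. p \<in> UNIV \<times> Yset \<Longrightarrow> \<phi> (orbit_Z p) = orbit_Z (spine_proj (snd p))"
  shows "homotopic_with (\<lambda>_. True) Gamma_S1 Gamma_S1 \<phi> id"
proof (rule homotopic_with_Gamma_S1[where h = spine_deformation])
  have "continuous_on Yset spine_proj"
    unfolding spine_proj_def by (intro continuous_on_spine_cases continuous_on_spine spine_cos_eq_0)
  then have "continuous_on ({0..1} \<times> (UNIV \<times> Yset)) (\<lambda>q. spine_proj (snd (snd q)))"
    by (rule continuous_on_compose2) (auto intro!: continuous_intros)
  then have "continuous_on ({0..1} \<times> (UNIV \<times> Yset)) spine_deformation"
    unfolding spine_deformation_def case_prod_beta by (intro continuous_intros)
  moreover have "spine_deformation (t, p) \<in> UNIV \<times> Yset" if "t \<in> {0..1}" "p \<in> UNIV \<times> Yset" for t p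
    using segment_spine_proj_in_Yset[of "snd p" t] that by (auto simp: spine_deformation_def mem_Times_iff)
  ultimately show "continuous_map (top_of_set ({0..1} \<times> (UNIV \<times> Yset))) (top_of_set (UNIV \<times> Yset))
      spine_deformation"
    by auto
qed (simp_all add: assms spine_deformation_def spine_proj_gen_act gen_act_affine)

section \<open>The figure eight\<close>

lemma cis_2pi_eq_iff: "cis (2 * pi * x) = cis (2 * pi * y) \<longleftrightarrow> (\<exists>k::int. y = x + of_int k)"
proof
  assume "cis (2 * pi * x) = cis (2 * pi * y)"
  then have "sin (2 * pi * y) = sin (2 * pi * x) \<and> cos (2 * pi * y) = cos (2 * pi * x)"
    by (simp add: complex_eq_iff)
  then obtain k :: int where "2 * pi * y = 2 * pi * (x + of_int k)"
    by (auto simp: sin_cos_eq_iff algebra_simps)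
  then show "\<exists>k::int. y = x + of_int k"
    by auto
next
  assume "\<exists>k::int. y = x + of_int k"
  then show "cis (2 * pi * x) = cis (2 * pi * y)"
    by (auto simp: distrib_left simp flip: cis_mult)
qed

definition wedge_set :: "complex set" where
  "wedge_set = sphere (-1) 1 \<union> sphere 1 1"

lemma wedge_two_circles_eq: "wedge_two_circles = top_of_set wedge_set"
  by (simp add: wedge_two_circles_def wedge_set_def)

text \<open>\<open>e = -1\<close> and \<open>e = 1\<close> give the left and the right circle; the wedge point \<open>0\<close> corresponds to
  \<open>x \<in> 1/2 + \<int>\<close>, like the crossing points of the spine.\<close>

definition figure_eight :: "real \<Rightarrow> real \<Rightarrow> complex" where
  "figure_eight e x = complex_of_real e * (1 + cis (2 * pi * x))"

lemma figure_eight_in_wedge: "e \<in> {-1, 1} \<Longrightarrow> figure_eight e x \<in> wedge_set"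
  by (auto simp: wedge_set_def figure_eight_def dist_norm)

lemma figure_eight_shift: "figure_eight e (x + of_int k) = figure_eight e x"
  using cis_2pi_eq_iff[of x "x + of_int k"] by (auto simp: figure_eight_def)

lemma wedge_setE:
  assumes "u \<in> wedge_set"
  obtains e x where "e \<in> {-1, 1}" "x \<in> {-1/2..1/2}" "u = figure_eight e x"
proof -
  obtain e :: real where e: "e \<in> {-1, 1}" "cmod (complex_of_real e * u - 1) = 1"
  proof (cases "u \<in> sphere (-1) 1")
    case True
    then have "cmod (complex_of_real (-1) * u - 1) = 1"
      by (simp add: dist_norm norm_minus_commute add.commute)
    then show ?thesis
      using that by blast
  next
    case False
    then have "cmod (complex_of_real 1 * u - 1) = 1"
      using assms by (simp add: wedge_set_def dist_norm norm_minus_commute)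
    then show ?thesis
      using that by blast
  qed
  define x where "x = Arg (complex_of_real e * u - 1) / (2 * pi)"
  have "cis (2 * pi * x) = complex_of_real e * u - 1"
    using e(2) cis_Arg[of "complex_of_real e * u - 1"] by (fastforce simp: x_def sgn_eq)
  then have "u = figure_eight e x"
    using e(1) by (auto simp: figure_eight_def)
  moreover have "x \<in> {-1/2..1/2}"
    using Arg_bounded[of "complex_of_real e * u - 1"] by (simp add: x_def field_simps)
  ultimately show ?thesis
    using that e(1) by blast
qed

lemma figure_eight_eq_cos_cis: "figure_eight e x = complex_of_real (2 * e * cos (pi * x)) * cis (pi * x)"
proof -
  have "1 + cis (2 * pi * x) = complex_of_real (2 * cos (pi * x)) * cis (pi * x)"
    using cos_double_cos[of "pi * x"] sin_double[of "pi * x"]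
    by (simp add: complex_eq_iff power2_eq_square mult.assoc)
  then show ?thesis
    by (simp add: figure_eight_def)
qed

lemma figure_eight_eq_imp:
  assumes e: "e \<in> {-1, 1}" "e' \<in> {-1, 1}" and eq: "figure_eight e x = figure_eight e' x'"
  shows "cis (2 * pi * x) = cis (2 * pi * x')" "e = e' \<or> cos (pi * x) = 0"
proof -
  have cis: "cis (2 * pi * y) = figure_eight d y / complex_of_real d - 1" if "d \<in> {-1, 1}" for d y
    using that by (auto simp: figure_eight_def)
  have Re: "Re (figure_eight d y) = 2 * d * (cos (pi * y))\<^sup>2" for d y
    by (simp add: figure_eight_eq_cos_cis power2_eq_square)
  have cases: "e = e' \<or> cos (pi * x) = 0 \<and> cos (pi * x') = 0"
  proof (cases "e = e'")
    case False
    then have "e' = - e" "e \<noteq> 0"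
      using e by auto
    moreover have "2 * e * (cos (pi * x))\<^sup>2 = 2 * e' * (cos (pi * x'))\<^sup>2"
      using arg_cong[OF eq, of Re] unfolding Re .
    ultimately have "(cos (pi * x))\<^sup>2 + (cos (pi * x'))\<^sup>2 = 0"
      using e by (auto simp del: sum_power2_eq_zero_iff)
    then show ?thesis
      by simp
  qed simp
  then show "e = e' \<or> cos (pi * x) = 0"
    by blast
  show "cis (2 * pi * x) = cis (2 * pi * x')"
    using cases
  proof
    assume "e = e'"
    then show ?thesis
      using eq cis[OF e(1), of x] cis[OF e(1), of x'] by simp
  next
    assume "cos (pi * x) = 0 \<and> cos (pi * x') = 0"
    then have "figure_eight e x = 0" "figure_eight e' x' = 0"
      by (simp_all add: figure_eight_eq_cos_cis)
    then show ?thesis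
      using cis[OF e(1), of x] cis[OF e(2), of x'] by simp
  qed
qed

lemma quotient_map_figure_eight:
  "quotient_map (top_of_set ({-1, 1} \<times> {-1/2..1/2})) wedge_two_circles (\<lambda>(e, x). figure_eight e x)"
proof (rule continuous_imp_quotient_map)
  let ?K = "{-1, 1::real} \<times> {-1/2..1/2::real}"
  have "(\<lambda>(e, x). figure_eight e x) ` ?K = wedge_set"
  proof
    show "(\<lambda>(e, x). figure_eight e x) ` ?K \<subseteq> wedge_set"
      using figure_eight_in_wedge by auto
    show "wedge_set \<subseteq> (\<lambda>(e, x). figure_eight e x) ` ?K"
      by (force elim!: wedge_setE)
  qed
  moreover have "continuous_on ?K (\<lambda>(e, x). figure_eight e x)"
    unfolding figure_eight_def case_prod_beta by (intro continuous_intros)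
  ultimately show "continuous_map (top_of_set ?K) wedge_two_circles (\<lambda>(e, x). figure_eight e x)"
    "(\<lambda>(e, x). figure_eight e x) ` topspace (top_of_set ?K) = topspace wedge_two_circles"
    by (auto simp: wedge_two_circles_eq)
qed (simp_all add: wedge_two_circles_eq compact_Times compact_space_subtopology Hausdorff_space_subtopology)

lemma orbit_Z_spine_eq_if_figure_eight_eq:
  assumes e: "e \<in> {-1, 1}" "e' \<in> {-1, 1}" and eq: "figure_eight e x = figure_eight e' x'"
  shows "orbit_Z (spine e x) = orbit_Z (spine e' x')"
proof -
  obtain k :: int where "x' = x + of_int k"
    using figure_eight_eq_imp(1)[OF e eq] cis_2pi_eq_iff by blast
  then have "orbit_Z (spine e' x') = orbit_Z (spine e' x)"
    by (simp add: orbit_Z_spine_shift)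
  also have "spine e' x = spine e x"
    using figure_eight_eq_imp(2)[OF e eq] spine_cos_eq_0 by metis
  finally show ?thesis ..
qed

lemma wedge_to_Gamma_S1:
  obtains g where "continuous_map wedge_two_circles Gamma_S1 g"
    "\<And>e x. e \<in> {-1, 1} \<Longrightarrow> g (figure_eight e x) = orbit_Z (spine e x)"
proof -
  define K where "K = {-1, 1::real} \<times> {-1/2..1/2::real}"
  have "continuous_on K (\<lambda>(e, x). spine e x)"
    unfolding spine_def case_prod_beta by (intro continuous_intros)
  moreover have "spine (fst p) (snd p) \<in> UNIV \<times> Yset" if "p \<in> K" for p
    using that by (intro spine_in_Yset) (auto simp: K_def)
  ultimately have "continuous_map (top_of_set K) (top_of_set (UNIV \<times> Yset)) (\<lambda>(e, x). spine e x)"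
    by (auto simp: case_prod_beta)
  then have cont: "continuous_map (top_of_set K) Gamma_S1 (orbit_Z \<circ> (\<lambda>(e, x). spine e x))"
    by (rule continuous_map_compose[OF _ quotient_imp_continuous_map[OF quotient_map_Gamma_S1]])
  have fibres: "(orbit_Z \<circ> (\<lambda>(e, x). spine e x)) p = (orbit_Z \<circ> (\<lambda>(e, x). spine e x)) q"
    if "p \<in> topspace (top_of_set K)" "q \<in> topspace (top_of_set K)"
      and "(\<lambda>(e, x). figure_eight e x) p = (\<lambda>(e, x). figure_eight e x) q" for p q
  proof -
    obtain e x e' x' where pq: "p = (e, x)" "q = (e', x')"
      by fastforce
    with that have "e \<in> {-1, 1}" "e' \<in> {-1, 1}" "figure_eight e x = figure_eight e' x'"
      by (auto simp: K_def)
    then have "orbit_Z (spine e x) = orbit_Z (spine e' x')"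
      by (rule orbit_Z_spine_eq_if_figure_eight_eq)
    then show ?thesis
      using pq by simp
  qed
  obtain g where g: "continuous_map wedge_two_circles Gamma_S1 g"
    and g_K: "\<And>p. p \<in> topspace (top_of_set K) \<Longrightarrow>
      g ((\<lambda>(e, x). figure_eight e x) p) = (orbit_Z \<circ> (\<lambda>(e, x). spine e x)) p"
    by (rule quotient_map_lift_exists[OF quotient_map_figure_eight[folded K_def] cont fibres]) auto
  have "g (figure_eight e x) = orbit_Z (spine e x)" if "e \<in> {-1, 1}" for e x
  proof -
    define k where "k = \<lfloor>x + 1/2\<rfloor>"
    have "(e, x - of_int k) \<in> K"
      using that by (simp add: K_def k_def) linarith
    then show ?thesis
      using g_K[of "(e, x - of_int k)"] figure_eight_shift[of e "x - of_int k" k]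
        orbit_Z_spine_shift[of e "x - of_int k" k] by simp
  qed
  with g that show ?thesis
    by blast
qed

section \<open>The homotopy equivalence\<close>

lemma Gamma_S1_to_wedge:
  obtains f where "continuous_map Gamma_S1 wedge_two_circles f"
    "\<And>p. p \<in> UNIV \<times> Yset \<Longrightarrow> f (orbit_Z p) = figure_eight (spine_side (snd p)) (spine_param (snd p))"
proof (rule Gamma_S1_lift_exists[where h = "\<lambda>p. figure_eight (spine_side (snd p)) (spine_param (snd p))"])
  have "continuous_on Yset (\<lambda>z. figure_eight (spine_side z) (spine_param z))"
    by (rule continuous_on_spine_cases) (simp_all add: figure_eight_eq_cos_cis continuous_intros)
  then have "continuous_on (UNIV \<times> Yset) (\<lambda>p. figure_eight (spine_side (snd p)) (spine_param (snd p)))"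
    by (rule continuous_on_compose2) (auto intro: continuous_intros)
  moreover have "figure_eight (spine_side z) x \<in> wedge_set" for z x
    by (rule figure_eight_in_wedge) (simp add: spine_side_def)
  ultimately show "continuous_map (top_of_set (UNIV \<times> Yset)) wedge_two_circles
      (\<lambda>p. figure_eight (spine_side (snd p)) (spine_param (snd p)))"
    by (auto simp: wedge_two_circles_eq)
  show "figure_eight (spine_side (snd (gen_act p))) (spine_param (snd (gen_act p))) =
      figure_eight (spine_side (snd p)) (spine_param (snd p))" for p
    using figure_eight_shift[of _ _ 1] by (simp add: spine_side_gen_act spine_param_gen_act)
qed (rule that)

lemma sphere_one_Re_nonpos:
  assumes "u \<in> sphere 1 1" "Re u \<le> 0"
  shows "u = 0"
proof -
  have "(1 - Re u)\<^sup>2 + (Im u)\<^sup>2 = 1"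
    using assms(1) by (simp add: dist_norm cmod_def)
  then have "(Re u)\<^sup>2 + (Im u)\<^sup>2 = 2 * Re u"
    by (simp add: power2_eq_square algebra_simps)
  with assms(2) show ?thesis
    by (smt (verit) complex_eq_iff sum_power2_ge_zero sum_power2_eq_zero_iff zero_complex.sel)
qed

lemma wedge_Re_nonpos: "u \<in> wedge_set \<Longrightarrow> Re u \<le> 0 \<Longrightarrow> u \<in> sphere (-1) 1"
  using sphere_one_Re_nonpos by (force simp: wedge_set_def)

lemma wedge_Re_nonneg:
  assumes "u \<in> wedge_set" "0 \<le> Re u"
  shows "u \<in> sphere 1 1"
proof (rule ccontr)
  assume "u \<notin> sphere 1 1"
  then have "-u \<in> sphere 1 1"
    using assms(1) dist_minus[of "-1" u] by (simp add: wedge_set_def)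
  then show False
    using sphere_one_Re_nonpos[of "-u"] assms(2) \<open>u \<notin> sphere 1 1\<close> by simp
qed

definition wedge_unwinding :: "real \<Rightarrow> complex \<Rightarrow> complex" where
  "wedge_unwinding t u =
     (if Re u \<le> 0 then -1 + (u + 1) * cis (2 * (1 - t) * arctan (- Im u / 2))
      else 1 + (u - 1) * cis (2 * (1 - t) * arctan (Im u / 2)))"

lemma wedge_unwinding_in_wedge:
  assumes "u \<in> wedge_set"
  shows "wedge_unwinding t u \<in> wedge_set"
  using wedge_Re_nonpos[OF assms] wedge_Re_nonneg[OF assms]
  by (auto simp: wedge_set_def wedge_unwinding_def dist_norm norm_mult norm_minus_commute)

lemma homotopic_wedge_unwinding:
  "homotopic_with (\<lambda>_. True) wedge_two_circles wedge_two_circles (wedge_unwinding 0) id"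
proof -
  have "continuous_on ({0..1::real} \<times> wedge_set) (\<lambda>(t, u). wedge_unwinding t u)"
    unfolding wedge_unwinding_def case_prod_beta
  proof (intro continuous_on_cases_le continuous_intros)
    fix p :: "real \<times> complex" assume "p \<in> {0..1} \<times> wedge_set" "Re (snd p) = 0"
    then have "snd p = 0"
      using wedge_Re_nonneg sphere_one_Re_nonpos by force
    then show "-1 + (snd p + 1) * cis (2 * (1 - fst p) * arctan (- Im (snd p) / 2)) =
        1 + (snd p - 1) * cis (2 * (1 - fst p) * arctan (Im (snd p) / 2))"
      by simp
  qed simp_all
  moreover have "(\<lambda>(t, u). wedge_unwinding t u) \<in> {0..1} \<times> wedge_set \<rightarrow> wedge_set"
    using wedge_unwinding_in_wedge by auto
  moreover have "wedge_unwinding 1 u = u" for u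
    by (simp add: wedge_unwinding_def)
  ultimately show ?thesis
    unfolding wedge_two_circles_eq
    by (subst homotopic_with) (auto intro!: exI[of _ "\<lambda>(t, u). wedge_unwinding t u"])
qed

lemma spine_param_spine:
  assumes "e \<in> {-1, 1}"
  shows "spine_param (snd (spine e x)) = x + arctan (sin (pi * x) * cos (pi * x)) / pi"
  using assms by (auto simp: spine_param_def spine_def power_mult_distrib)

lemma figure_eight_spine_param:
  assumes e: "e \<in> {-1, 1}"
  shows "figure_eight (spine_side (snd (spine e x))) (spine_param (snd (spine e x))) =
    wedge_unwinding 0 (figure_eight e x)"
proof (cases "cos (pi * x) = 0")
  case True
  then show ?thesis
    using e by (auto simp: spine_param_spine figure_eight_eq_cos_cis wedge_unwinding_def)
next
  case False
  define a where "a = arctan (sin (pi * x) * cos (pi * x))"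
  define u where "u = figure_eight e x"
  have "spine_side (snd (spine e x)) = e"
    using e False by (auto simp: spine_side_def spine_def mult_le_0_iff)
  moreover have "cis (2 * pi * (x + a / pi)) = cis (2 * pi * x) * cis (2 * a)"
    by (simp add: cis_mult distrib_left)
  ultimately have lhs: "figure_eight (spine_side (snd (spine e x))) (spine_param (snd (spine e x))) =
      complex_of_real e * (1 + cis (2 * pi * x) * cis (2 * a))"
    using e by (simp add: spine_param_spine figure_eight_def a_def)
  have Im: "e * Im u / 2 = sin (pi * x) * cos (pi * x)"
    using e by (auto simp: u_def figure_eight_def sin_double mult.assoc)
  have Re: "Re u = e * (2 * (cos (pi * x))\<^sup>2)"
    by (simp add: u_def figure_eight_eq_cos_cis power2_eq_square)
  have "wedge_unwinding 0 u = complex_of_real e * (1 + cis (2 * pi * x) * cis (2 * a))"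
    using e
  proof
    assume "e = -1"
    then have "wedge_unwinding 0 u = -1 + (u + 1) * cis (2 * a)"
      using Re Im by (simp add: wedge_unwinding_def a_def)
    then show ?thesis
      using \<open>e = -1\<close> by (simp add: u_def figure_eight_def algebra_simps)
  next
    assume "e \<in> {1}"
    then have "wedge_unwinding 0 u = 1 + (u - 1) * cis (2 * a)"
      using Re Im by (simp add: wedge_unwinding_def a_def)
    then show ?thesis
      using \<open>e \<in> {1}\<close> by (simp add: u_def figure_eight_def algebra_simps)
  qed
  with lhs show ?thesis
    by (simp add: u_def)
qed

theorem theorem3p2:
  shows "Gamma_S1 homotopy_equivalent_space wedge_two_circles"
proof -
  obtain f where f: "continuous_map Gamma_S1 wedge_two_circles f"
    and f_orbit: "\<And>p. p \<in> UNIV \<times> Yset \<Longrightarrow>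
      f (orbit_Z p) = figure_eight (spine_side (snd p)) (spine_param (snd p))"
    using Gamma_S1_to_wedge by metis
  obtain g where g: "continuous_map wedge_two_circles Gamma_S1 g"
    and g_figure_eight: "\<And>e x. e \<in> {-1, 1} \<Longrightarrow> g (figure_eight e x) = orbit_Z (spine e x)"
    using wedge_to_Gamma_S1 by metis
  have "homotopic_with (\<lambda>_. True) Gamma_S1 Gamma_S1 (g \<circ> f) id"
    by (rule homotopic_spine_proj_id) (simp add: f_orbit g_figure_eight spine_proj_def spine_side_def)
  moreover have "homotopic_with (\<lambda>_. True) wedge_two_circles wedge_two_circles (f \<circ> g) id"
  proof (rule homotopic_with_eq[OF homotopic_wedge_unwinding])
    fix u assume "u \<in> topspace wedge_two_circles"
    then have "u \<in> wedge_set"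
      by (simp add: wedge_two_circles_eq)
    then obtain e x where e: "e \<in> {-1, 1}" and u: "u = figure_eight e x"
      by (metis wedge_setE)
    show "(f \<circ> g) u = wedge_unwinding 0 u"
      using spine_in_Yset[of e x] e
      by (auto simp: u g_figure_eight f_orbit figure_eight_spine_param)
  qed auto
  ultimately show ?thesis
    using f g unfolding homotopy_equivalent_space_def by blast
qed

end
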